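(* Let $X$ be a real Banach space, $x\in S_X$, $\delta\ge0$ and $0<t_1<t_2$. Then (1) $Q_{B_X}(t_2x,\delta)\subseteq Q_{B_X}(t_1x,\delta)\subseteq Q_{B_X}(t_2x,\frac{t_2}{t_1}\delta)$; (2) $Q_{S_X}(t_2x,\delta)\subseteq Q_{S_X}(t_1x,\delta)\subseteq Q_{S_X}(t_2x,\frac{t_2}{t_1}\delta)$.
   Context: $B_X,S_X$ are the closed unit ball and unit sphere. For non-empty bounded $F$ and $y\in X$, $r(F,y)=\sup_{z\in F}\|y-z\|$ and $Q_F(y,\delta)=\{z\in F:\|y-z\|\ge r(F,y)-\delta\}$. *)

theory Defs
  imports "HOL-Analysis.Analysis"
begin

definition rad :: "'a::real_normed_vector set \<Rightarrow> 'a \<Rightarrow> real" where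
  "rad F y = (SUP z\<in>F. norm (y - z))"

definition Qset :: "'a::real_normed_vector set \<Rightarrow> 'a \<Rightarrow> real \<Rightarrow> 'a set" where
  "Qset F y \<delta> = {z \<in> F. norm (y - z) \<ge> rad F y - \<delta>}"

end

theory Submission
  imports Defs
begin

text \<open>
  If \<open>-x\<close> lies in \<open>F \<subseteq> B\<^sub>X\<close>, then \<open>-x\<close> is a farthest point of \<open>F\<close> from \<open>t x\<close>, so
  \<open>r(F, t x) = 1 + t\<close> and \<open>z \<in> Q\<^sub>F(t x, \<delta>)\<close> means that the deficit
  \<open>1 + t - \<parallel>t x - z\<parallel>\<close> is at most \<open>\<delta>\<close>. As a function of \<open>t\<close> this deficit is
  nondecreasing, because \<open>t \<mapsto> \<parallel>t x - z\<parallel>\<close> is 1-Lipschitz, and concave with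
  nonnegative value \<open>1 - \<parallel>z\<parallel>\<close> at \<open>t = 0\<close>, so the deficit divided by \<open>t\<close> is nonincreasing.
  These two facts are exactly the two inclusions.
\<close>

lemma rad_scaleR_antipodal:
  fixes x :: "'a::real_normed_vector"
  assumes "norm x = 1" "t \<ge> 0" "F \<subseteq> cball 0 1" "-x \<in> F"
  shows "rad F (t *\<^sub>R x) = 1 + t"
  unfolding rad_def
proof (rule antisym)
  have bound: "norm (t *\<^sub>R x - z) \<le> 1 + t" if "z \<in> F" for z
  proof -
    have "norm (t *\<^sub>R x - z) \<le> norm (t *\<^sub>R x) + norm z" by (rule norm_triangle_ineq4)
    also have "\<dots> \<le> t + 1" using assms that by auto
    finally show ?thesis by simp
  qed
  show "(SUP z\<in>F. norm (t *\<^sub>R x - z)) \<le> 1 + t"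
    using assms(4) bound by (intro cSUP_least) auto
  have "t *\<^sub>R x - (-x) = (1 + t) *\<^sub>R x" by (simp add: algebra_simps)
  then have "norm (t *\<^sub>R x - (-x)) = 1 + t" using assms by simp
  moreover have "norm (t *\<^sub>R x - (-x)) \<le> (SUP z\<in>F. norm (t *\<^sub>R x - z))"
    using assms(4) bound by (intro cSUP_upper) (auto intro!: bdd_aboveI2)
  ultimately show "1 + t \<le> (SUP z\<in>F. norm (t *\<^sub>R x - z))" by simp
qed

lemma Qset_scaleR_antipodal_iff:
  fixes x :: "'a::real_normed_vector"
  assumes "norm x = 1" "t \<ge> 0" "F \<subseteq> cball 0 1" "-x \<in> F"
  shows "z \<in> Qset F (t *\<^sub>R x) \<delta> \<longleftrightarrow> z \<in> F \<and> 1 + t - norm (t *\<^sub>R x - z) \<le> \<delta>"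
  using rad_scaleR_antipodal[OF assms] unfolding Qset_def by auto

lemma norm_scaleR_diff_lipschitz:
  fixes x z :: "'a::real_normed_vector"
  shows "\<bar>norm (s *\<^sub>R x - z) - norm (t *\<^sub>R x - z)\<bar> \<le> \<bar>s - t\<bar> * norm x"
proof -
  have "(s *\<^sub>R x - z) - (t *\<^sub>R x - z) = (s - t) *\<^sub>R x" by (simp add: algebra_simps)
  then show ?thesis by (metis norm_scaleR norm_triangle_ineq3)
qed

lemma norm_scaleR_diff_convex:
  fixes y z :: "'a::real_normed_vector"
  assumes "0 \<le> u" "u \<le> 1"
  shows "norm (u *\<^sub>R y - z) \<le> u * norm (y - z) + (1 - u) * norm z"
proof -
  have "u *\<^sub>R y - z = u *\<^sub>R (y - z) + (1 - u) *\<^sub>R (- z)" by (simp add: algebra_simps)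
  then have "norm (u *\<^sub>R y - z) \<le> norm (u *\<^sub>R (y - z)) + norm ((1 - u) *\<^sub>R (- z))"
    by (metis norm_triangle_ineq)
  with assms show ?thesis by simp
qed

lemma Qset_scaleR_antipodal_subset_smaller:
  fixes x :: "'a::real_normed_vector"
  assumes "norm x = 1" "0 \<le> t1" "t1 \<le> t2" "F \<subseteq> cball 0 1" "-x \<in> F"
  shows "Qset F (t2 *\<^sub>R x) \<delta> \<subseteq> Qset F (t1 *\<^sub>R x) \<delta>"
proof
  note Q_iff = Qset_scaleR_antipodal_iff[OF assms(1) _ assms(4,5)]
  fix z assume "z \<in> Qset F (t2 *\<^sub>R x) \<delta>"
  then have "z \<in> F" "1 + t2 - norm (t2 *\<^sub>R x - z) \<le> \<delta>"
    using Q_iff[of t2] assms(2,3) by auto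
  moreover have "norm (t2 *\<^sub>R x - z) - norm (t1 *\<^sub>R x - z) \<le> t2 - t1"
    using norm_scaleR_diff_lipschitz[of t2 x z t1] assms by simp
  ultimately show "z \<in> Qset F (t1 *\<^sub>R x) \<delta>"
    using Q_iff[of t1] assms(2) by simp
qed

lemma Qset_scaleR_antipodal_subset_larger:
  fixes x :: "'a::real_normed_vector"
  assumes "norm x = 1" "0 < t1" "t1 \<le> t2" "F \<subseteq> cball 0 1" "-x \<in> F"
  shows "Qset F (t1 *\<^sub>R x) \<delta> \<subseteq> Qset F (t2 *\<^sub>R x) ((t2 / t1) * \<delta>)"
proof
  note Q_iff = Qset_scaleR_antipodal_iff[OF assms(1) _ assms(4,5)]
  fix z assume "z \<in> Qset F (t1 *\<^sub>R x) \<delta>"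
  then have "z \<in> F" and deficit: "1 + t1 - norm (t1 *\<^sub>R x - z) \<le> \<delta>"
    using Q_iff[of t1] assms(2) by auto
  then have "norm z \<le> 1" using assms(4) by auto
  have u: "0 < t1 / t2" "t1 / t2 \<le> 1" using assms by auto
  have "t1 *\<^sub>R x = (t1 / t2) *\<^sub>R (t2 *\<^sub>R x)" using assms by simp
  then have "norm (t1 *\<^sub>R x - z) \<le> (t1 / t2) * norm (t2 *\<^sub>R x - z) + (1 - t1 / t2) * norm z"
    using norm_scaleR_diff_convex[of "t1 / t2" "t2 *\<^sub>R x" z] u by (simp only:)
  also have "\<dots> \<le> (t1 / t2) * norm (t2 *\<^sub>R x - z) + (1 - t1 / t2)"
    using \<open>norm z \<le> 1\<close> u by (simp add: mult_left_le)
  moreover have "(t1 / t2) * (1 + t2 - norm (t2 *\<^sub>R x - z))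
      = t1 / t2 + t1 - (t1 / t2) * norm (t2 *\<^sub>R x - z)"
    using assms by (simp add: field_simps)
  ultimately have "(t1 / t2) * (1 + t2 - norm (t2 *\<^sub>R x - z)) \<le> \<delta>"
    using deficit by linarith
  then have "1 + t2 - norm (t2 *\<^sub>R x - z) \<le> (t2 / t1) * \<delta>"
    using assms by (simp add: field_simps)
  with \<open>z \<in> F\<close> show "z \<in> Qset F (t2 *\<^sub>R x) ((t2 / t1) * \<delta>)"
    using Q_iff[of t2] assms(2,3) by simp
qed

theorem lemma2p13:
  fixes x :: "'a::banach" and \<delta> t1 t2 :: real
  assumes "x \<in> sphere 0 1" and "\<delta> \<ge> 0" and "0 < t1" and "t1 < t2"
  shows "Qset (cball 0 1) (t2 *\<^sub>R x) \<delta> \<subseteq> Qset (cball 0 1) (t1 *\<^sub>R x) \<delta>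
       \<and> Qset (cball 0 1) (t1 *\<^sub>R x) \<delta> \<subseteq> Qset (cball 0 1) (t2 *\<^sub>R x) ((t2 / t1) * \<delta>)
       \<and> Qset (sphere 0 1) (t2 *\<^sub>R x) \<delta> \<subseteq> Qset (sphere 0 1) (t1 *\<^sub>R x) \<delta>
       \<and> Qset (sphere 0 1) (t1 *\<^sub>R x) \<delta> \<subseteq> Qset (sphere 0 1) (t2 *\<^sub>R x) ((t2 / t1) * \<delta>)"
proof -
  have x: "norm x = 1" using assms(1) by simp
  have t: "0 \<le> t1" "t1 \<le> t2" using assms(3,4) by auto
  have antipode: "-x \<in> cball 0 1" "-x \<in> sphere 0 1" using x by auto
  have sphere: "sphere (0::'a) 1 \<subseteq> cball 0 1" by auto
  show ?thesis
    using Qset_scaleR_antipodal_subset_smaller[OF x t order_refl antipode(1)]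
      Qset_scaleR_antipodal_subset_larger[OF x assms(3) t(2) order_refl antipode(1)]
      Qset_scaleR_antipodal_subset_smaller[OF x t sphere antipode(2)]
      Qset_scaleR_antipodal_subset_larger[OF x assms(3) t(2) sphere antipode(2)]
    by blast
qed

end
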